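(* Let $\rho_{AB}$ be an arbitrary two-qubit state, $\rho_A=\operatorname{Tr}_B[\rho_{AB}]$, $\rho_B=\operatorname{Tr}_A[\rho_{AB}]$, $\mu_1,\mu_2\in[0,\tfrac{1}{\sqrt3}]$, and $\tau^1_{AB}=\mu_1\rho_{AB}+(1-\mu_1)\rho_A\otimes\tfrac{\mathbb{I}}{2}$, $\tau^2_{AB}=\mu_2\rho_{AB}+(1-\mu_2)\tfrac{\mathbb{I}}{2}\otimes\rho_B$. If the partial transpose of $\tau^1_{AB}$ has at least one negative eigenvalue, then $\rho_{AB}$ is EPR steerable from Bob to Alice. If the partial transpose of $\tau^2_{AB}$ has at least one negative eigenvalue, then $\rho_{AB}$ is EPR steerable from Alice to Bob.
   Context: $\mathbb{I}$ is the $2\times2$ identity. Partial transpose means $(\mathrm{id}\otimes T)$ applied to the two-qubit operator, with $T$ the transpose in the computational basis. EPR steerability: $\rho_{AB}$ is NOT EPR steerable from Bob to Alice iff there exist $P(\lambda)$, quantum states $\rho^A_\lambda$ of Alice, and arbitrary distributions $P(b|B,\lambda)$ such that for all POVM measurements $A=\{M^A_a\}$ of Alice, $B=\{M^B_b\}$ of Bob and all outcomes, $\operatorname{Tr}[(M^A_a\otimes M^B_b)\rho_{AB}]=\sum_\lambda P(\lambda)\operatorname{Tr}[\rho^A_\lambda M^A_a]P(b|B,\lambda)$; otherwise it is steerable from Bob to Alice. Steerability from Alice to Bob is defined symmetrically, with Bob's side given by quantum states $\rho^B_\lambda$ and Alice's side by arbitrary distributions $P(a|A,\lambda)$. *)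

theory Defs
  imports "Jordan_Normal_Form.Char_Poly" "HOL-Analysis.Infinite_Sum"
begin

text \<open>Two-qubit operators are 4x4 complex matrices w.r.t. the computational basis
  |a b> (a for Alice, b for Bob), indexed by 2*a+b.\<close>

definition mtrace :: "complex mat \<Rightarrow> complex" where
  "mtrace A = (\<Sum>i<dim_row A. A $$ (i, i))"

definition psd :: "nat \<Rightarrow> complex mat \<Rightarrow> bool" where
  "psd n A \<longleftrightarrow> A \<in> carrier_mat n n \<and>
     (\<forall>v \<in> carrier_vec n.
        let q = (\<Sum>i<n. \<Sum>j<n. cnj (v $ i) * A $$ (i, j) * v $ j) in Im q = 0 \<and> Re q \<ge> 0)"

definition density :: "nat \<Rightarrow> complex mat \<Rightarrow> bool" where
  "density n A \<longleftrightarrow> psd n A \<and> mtrace A = 1"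

definition qubit_state :: "complex mat \<Rightarrow> bool" where
  "qubit_state A \<longleftrightarrow> density 2 A"

definition two_qubit_state :: "complex mat \<Rightarrow> bool" where
  "two_qubit_state A \<longleftrightarrow> density 4 A"

definition kron :: "complex mat \<Rightarrow> complex mat \<Rightarrow> complex mat" where
  "kron A B = mat (dim_row A * dim_row B) (dim_col A * dim_col B)
     (\<lambda>(i, j). A $$ (i div dim_row B, j div dim_col B) * B $$ (i mod dim_row B, j mod dim_col B))"

definition ptrace_B :: "complex mat \<Rightarrow> complex mat" where
  "ptrace_B r = mat 2 2 (\<lambda>(i, j). \<Sum>k<2. r $$ (2 * i + k, 2 * j + k))"

definition ptrace_A :: "complex mat \<Rightarrow> complex mat" where
  "ptrace_A r = mat 2 2 (\<lambda>(i, j). \<Sum>k<2. r $$ (2 * k + i, 2 * k + j))"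

definition ptranspose_B :: "complex mat \<Rightarrow> complex mat" where
  "ptranspose_B r = mat 4 4 (\<lambda>(i, j). r $$ (2 * (i div 2) + j mod 2, 2 * (j div 2) + i mod 2))"

definition has_neg_eigenvalue :: "complex mat \<Rightarrow> bool" where
  "has_neg_eigenvalue A \<longleftrightarrow> (\<exists>x::real. x < 0 \<and> eigenvalue A (complex_of_real x))"

definition qubit_povm :: "complex mat list \<Rightarrow> bool" where
  "qubit_povm M \<longleftrightarrow> (\<forall>E \<in> set M. psd 2 E) \<and>
     (\<forall>i<2. \<forall>j<2. (\<Sum>b<length M. (M ! b) $$ (i, j)) = (1\<^sub>m 2) $$ (i, j))"

text \<open>Local hidden state models; hidden variables lambda range over a countable set (nat),
  P(lambda) a probability distribution, sums as (absolutely convergent) has_sum.\<close>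

definition lhs_model_B_to_A :: "complex mat \<Rightarrow> bool" where
  "lhs_model_B_to_A r \<longleftrightarrow>
     (\<exists>(P :: nat \<Rightarrow> real) (\<sigma> :: nat \<Rightarrow> complex mat) (resp :: complex mat list \<Rightarrow> nat \<Rightarrow> nat \<Rightarrow> real).
        (\<forall>l. P l \<ge> 0) \<and> (P has_sum 1) UNIV \<and> (\<forall>l. qubit_state (\<sigma> l)) \<and>
        (\<forall>B l. qubit_povm B \<longrightarrow> (\<forall>b<length B. resp B l b \<ge> 0) \<and> (\<Sum>b<length B. resp B l b) = 1) \<and>
        (\<forall>A B a b. qubit_povm A \<longrightarrow> qubit_povm B \<longrightarrow> a < length A \<longrightarrow> b < length B \<longrightarrow>
           ((\<lambda>l. complex_of_real (P l) * mtrace (\<sigma> l * (A ! a)) * complex_of_real (resp B l b))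
              has_sum mtrace (kron (A ! a) (B ! b) * r)) UNIV))"

definition lhs_model_A_to_B :: "complex mat \<Rightarrow> bool" where
  "lhs_model_A_to_B r \<longleftrightarrow>
     (\<exists>(P :: nat \<Rightarrow> real) (\<sigma> :: nat \<Rightarrow> complex mat) (resp :: complex mat list \<Rightarrow> nat \<Rightarrow> nat \<Rightarrow> real).
        (\<forall>l. P l \<ge> 0) \<and> (P has_sum 1) UNIV \<and> (\<forall>l. qubit_state (\<sigma> l)) \<and>
        (\<forall>A l. qubit_povm A \<longrightarrow> (\<forall>a<length A. resp A l a \<ge> 0) \<and> (\<Sum>a<length A. resp A l a) = 1) \<and>
        (\<forall>A B a b. qubit_povm A \<longrightarrow> qubit_povm B \<longrightarrow> a < length A \<longrightarrow> b < length B \<longrightarrow>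
           ((\<lambda>l. complex_of_real (P l) * complex_of_real (resp A l a) * mtrace (\<sigma> l * (B ! b)))
              has_sum mtrace (kron (A ! a) (B ! b) * r)) UNIV))"

definition steerable_B_to_A :: "complex mat \<Rightarrow> bool" where
  "steerable_B_to_A r \<longleftrightarrow> \<not> lhs_model_B_to_A r"

definition steerable_A_to_B :: "complex mat \<Rightarrow> bool" where
  "steerable_A_to_B r \<longleftrightarrow> \<not> lhs_model_A_to_B r"

end

theory Submission
  imports Defs
begin

(* An LHS model for steering from Bob to Alice assigns to each hidden variable l a state sigma_l
   of Alice and response probabilities of Bob. Evaluating the model on an informationally complete
   set of qubit measurements on both sides gives rho = sum_l P(l) sigma_l \<otimes> G_l, where
   G_l = (I + r_l . sigma)/2 is assembled from Bob's responses to Z, X and Y, so r_l \<in> [-1,1]^3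
   but G_l need not be positive. Since tr G_l = 1, the noisy state is
   tau^1 = sum_l P(l) sigma_l \<otimes> (mu G_l + (1 - mu) I/2), and mu \<le> 1/sqrt 3 gives |mu r_l| \<le> 1,
   so every factor is positive: tau^1 is separable and its partial transpose has no negative
   eigenvalue. The direction from Alice to Bob is symmetric. *)

lemma has_sum_sum:
  fixes f :: "'i \<Rightarrow> 'a \<Rightarrow> 'b::topological_comm_monoid_add"
  assumes "finite I" "\<And>i. i \<in> I \<Longrightarrow> (f i has_sum s i) A"
  shows "((\<lambda>x. \<Sum>i\<in>I. f i x) has_sum (\<Sum>i\<in>I. s i)) A"
  using assms by (induction I rule: finite_induct) (auto intro: has_sum_add)

lemma sum_lessThan_2: "(\<Sum>i<2::nat. g i) = g 0 + (g 1 :: 'a::comm_monoid_add)"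
  by (simp add: numeral_eq_Suc lessThan_Suc add.commute)

lemma sum_lessThan_4: "(\<Sum>i<4::nat. g i) = g 0 + g 1 + g 2 + (g 3 :: 'a::comm_monoid_add)"
  by (simp add: numeral_eq_Suc lessThan_Suc add.assoc add.commute add.left_commute)

lemma sum_lessThan_4_split: "(\<Sum>r<4::nat. g r) = (\<Sum>i<2. \<Sum>b<2. g (2*i+b) :: 'a::comm_monoid_add)"
  by (simp add: sum_lessThan_4 sum_lessThan_2 add.assoc)

definition mat2 :: "complex \<Rightarrow> complex \<Rightarrow> complex \<Rightarrow> complex \<Rightarrow> complex mat" where
  "mat2 a b c d = mat 2 2 (\<lambda>(i, j). if i = 0 then (if j = 0 then a else b) else (if j = 0 then c else d))"

lemma mat2_simps [simp]:
  "mat2 a b c d $$ (0, 0) = a" "mat2 a b c d $$ (0, Suc 0) = b"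
  "mat2 a b c d $$ (Suc 0, 0) = c" "mat2 a b c d $$ (Suc 0, Suc 0) = d"
  "mat2 a b c d \<in> carrier_mat 2 2"
  by (simp_all add: mat2_def)

lemma mtrace_mult_2x2:
  assumes "A \<in> carrier_mat 2 2" "B \<in> carrier_mat 2 2"
  shows "mtrace (A * B) = A$$(0,0)*B$$(0,0) + A$$(0,1)*B$$(1,0) + A$$(1,0)*B$$(0,1) + A$$(1,1)*B$$(1,1)"
  using assms by (simp add: mtrace_def sum_lessThan_2 scalar_prod_def atLeast0LessThan algebra_simps)

(* The projectors onto |0>, |1>, |+> and |+i>, which span all 2x2 matrices. *)
definition tomo_effect :: "nat \<Rightarrow> complex mat" where
  "tomo_effect e = (if e = 0 then mat2 1 0 0 0 else if e = 1 then mat2 0 0 0 1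
     else if e = 2 then mat2 (1/2) (1/2) (1/2) (1/2) else mat2 (1/2) (-\<i>/2) (\<i>/2) (1/2))"

definition reconstruct :: "(nat \<Rightarrow> complex) \<Rightarrow> nat \<Rightarrow> nat \<Rightarrow> complex" where
  "reconstruct t i j = (if i = j then (if i = 0 then t 0 else t 1)
     else (2 * t 2 - t 0 - t 1 + (if i = 0 then - \<i> else \<i>) * (2 * t 3 - t 0 - t 1)) / 2)"

lemma tomo_effect_carrier: "tomo_effect e \<in> carrier_mat 2 2"
  by (simp add: tomo_effect_def)

lemma reconstruct_mtrace:
  assumes "W \<in> carrier_mat 2 2" "i < 2" "j < 2"
  shows "reconstruct (\<lambda>e. mtrace (W * tomo_effect e)) i j = W $$ (i, j)"
proof -
  have "i = 0 \<or> i = 1" "j = 0 \<or> j = 1" using assms by auto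
  then show ?thesis using assms(1)
    by (auto simp: reconstruct_def mtrace_mult_2x2 tomo_effect_def complex_eq_iff field_simps)
qed

lemma reconstruct_cmult: "reconstruct (\<lambda>e. c * t e) i j = c * reconstruct t i j"
  by (simp add: reconstruct_def algebra_simps)

lemma reconstruct_as_sum:
  "reconstruct t i j = (\<Sum>e<4. reconstruct (\<lambda>f. of_bool (f = e)) i j * t e)"
  by (simp add: reconstruct_def sum_lessThan_4 field_simps)

lemma has_sum_reconstruct:
  assumes "\<And>e. e < 4 \<Longrightarrow> (h e has_sum t e) A"
  shows "((\<lambda>x. reconstruct (\<lambda>e. h e x) i j) has_sum reconstruct t i j) A"
  by (subst (1 2) reconstruct_as_sum, rule has_sum_sum) (auto intro!: has_sum_cmult_right assms)

definition bob_block :: "complex mat \<Rightarrow> nat \<Rightarrow> nat \<Rightarrow> complex mat" where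
  "bob_block r i j = mat 2 2 (\<lambda>(b, b'). r $$ (2 * i + b, 2 * j + b'))"

lemma mtrace_kron_mult:
  assumes "r \<in> carrier_mat 4 4" "E \<in> carrier_mat 2 2" "F \<in> carrier_mat 2 2"
  shows "mtrace (kron E F * r) = mtrace (mat 2 2 (\<lambda>(i, j). mtrace (bob_block r i j * F)) * E)"
  using assms
  by (simp add: mtrace_def kron_def bob_block_def scalar_prod_def atLeast0LessThan
      sum_lessThan_4 sum_lessThan_2)
    (simp add: numeral_2_eq_2 numeral_3_eq_3 algebra_simps)

lemma reconstruct_kron:
  assumes "r \<in> carrier_mat 4 4" "i < 2" "j < 2" "b < 2" "b' < 2"
  shows "reconstruct (\<lambda>f. reconstruct (\<lambda>e. mtrace (kron (tomo_effect e) (tomo_effect f) * r)) i j) b b'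
    = r $$ (2 * i + b, 2 * j + b')"
proof -
  have "reconstruct (\<lambda>e. mtrace (kron (tomo_effect e) (tomo_effect f) * r)) i j
      = mtrace (bob_block r i j * tomo_effect f)" for f
    using assms by (simp add: mtrace_kron_mult tomo_effect_carrier reconstruct_mtrace)
  moreover have "reconstruct (\<lambda>f. mtrace (bob_block r i j * tomo_effect f)) b b' = r $$ (2 * i + b, 2 * j + b')"
    using assms by (subst reconstruct_mtrace) (auto simp: bob_block_def)
  ultimately show ?thesis by simp
qed

lemma has_sum_product_tomography:
  assumes r: "r \<in> carrier_mat 4 4"
    and stat: "\<And>e f. e < 4 \<Longrightarrow> f < 4 \<Longrightarrow>
      ((\<lambda>l. x l e * y l f) has_sum mtrace (kron (tomo_effect e) (tomo_effect f) * r)) A"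
    and "i < 2" "j < 2" "b < 2" "b' < 2"
  shows "((\<lambda>l. reconstruct (x l) i j * reconstruct (y l) b b') has_sum r $$ (2 * i + b, 2 * j + b')) A"
proof -
  have "((\<lambda>l. reconstruct (\<lambda>f. reconstruct (\<lambda>e. x l e * y l f) i j) b b')
      has_sum reconstruct (\<lambda>f. reconstruct (\<lambda>e. mtrace (kron (tomo_effect e) (tomo_effect f) * r)) i j) b b') A"
    by (intro has_sum_reconstruct stat)
  moreover have "reconstruct (\<lambda>f. reconstruct (\<lambda>e. x l e * y l f) i j) b b'
      = reconstruct (x l) i j * reconstruct (y l) b b'" for l
    using reconstruct_cmult[of "y l f" "x l" i j for f] reconstruct_cmult[of "reconstruct (x l) i j" "y l" b b']
    by (simp add: mult.commute)
  ultimately show ?thesis using reconstruct_kron[OF assms(1,3-)] by simp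
qed

lemma psd_mat2_rank1:
  assumes "c \<ge> 0"
  shows "psd 2 (mat2 (of_real c * u * cnj u) (of_real c * u * cnj v) (of_real c * v * cnj u) (of_real c * v * cnj v))"
    (is "psd 2 ?A")
  unfolding psd_def
proof (intro conjI ballI)
  show "?A \<in> carrier_mat 2 2" by simp
  fix w :: "complex vec"
  define z where "z = cnj u * w$0 + cnj v * w$1"
  have "(\<Sum>i<2. \<Sum>j<2. cnj (w $ i) * ?A $$ (i, j) * w $ j) = of_real c * (z * cnj z)"
    by (simp add: sum_lessThan_2 z_def algebra_simps)
  also have "\<dots> = of_real (c * (cmod z)\<^sup>2)"
    by (simp flip: complex_norm_square)
  finally have q: "(\<Sum>i<2. \<Sum>j<2. cnj (w $ i) * ?A $$ (i, j) * w $ j) = of_real (c * (cmod z)\<^sup>2)" .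
  show "let q = \<Sum>i<2. \<Sum>j<2. cnj (w $ i) * ?A $$ (i, j) * w $ j in Im q = 0 \<and> 0 \<le> Re q"
    unfolding q Let_def using assms by simp
qed

lemma qubit_povm_pair:
  assumes "psd 2 E" "psd 2 F" "E + F = mat2 1 0 0 1" "E \<in> carrier_mat 2 2" "F \<in> carrier_mat 2 2"
  shows "qubit_povm [E, F]"
  unfolding qubit_povm_def
proof (intro conjI allI impI)
  show "\<forall>G\<in>set [E, F]. psd 2 G" using assms by auto
  fix i j :: nat assume "i < 2" "j < 2"
  then have "E $$ (i, j) + F $$ (i, j) = mat2 1 0 0 1 $$ (i, j)"
    using assms(3-) by (metis carrier_matD index_add_mat(1))
  also have "\<dots> = 1\<^sub>m 2 $$ (i, j)"
    using \<open>i < 2\<close> \<open>j < 2\<close> by (auto simp: mat2_def less_2_cases_iff)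
  finally show "(\<Sum>b<length [E, F]. [E, F] ! b $$ (i, j)) = 1\<^sub>m 2 $$ (i, j)"
    by (simp add: sum_lessThan_2)
qed

(* Indexed by effects: tomo_effect f is an outcome of tomo_povm f, so f = 0 and f = 1 share the
   Z measurement. *)
definition tomo_povm :: "nat \<Rightarrow> complex mat list" where
  "tomo_povm f = (if f < 2 then [tomo_effect 0, tomo_effect 1]
     else if f = 2 then [tomo_effect 2, mat2 (1/2) (-1/2) (-1/2) (1/2)]
     else [tomo_effect 3, mat2 (1/2) (\<i>/2) (-\<i>/2) (1/2)])"

definition tomo_outcome :: "nat \<Rightarrow> nat" where
  "tomo_outcome f = (if f = 1 then 1 else 0)"

lemma length_tomo_povm [simp]: "length (tomo_povm f) = 2"
  by (simp add: tomo_povm_def)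

lemma tomo_outcome_less [simp]: "tomo_outcome f < 2"
  by (simp add: tomo_outcome_def)

lemma tomo_povm_effect: "f < 4 \<Longrightarrow> tomo_povm f ! tomo_outcome f = tomo_effect f"
  by (auto simp: tomo_povm_def tomo_outcome_def less_Suc_eq numeral_eq_Suc)

lemma qubit_povm_tomo: "qubit_povm (tomo_povm f)"
proof -
  have psd: "psd 2 (mat2 (1/2) (1/2) (1/2) (1/2))" "psd 2 (mat2 (1/2) (-1/2) (-1/2) (1/2))"
    "psd 2 (mat2 (1/2) (-\<i>/2) (\<i>/2) (1/2))" "psd 2 (mat2 (1/2) (\<i>/2) (-\<i>/2) (1/2))"
    "psd 2 (mat2 1 0 0 0)" "psd 2 (mat2 0 0 0 1)"
    using psd_mat2_rank1[of "1/2" 1 1] psd_mat2_rank1[of "1/2" 1 "-1"]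
      psd_mat2_rank1[of "1/2" 1 \<i>] psd_mat2_rank1[of "1/2" 1 "-\<i>"]
      psd_mat2_rank1[of 1 1 0] psd_mat2_rank1[of 1 0 1]
    by simp_all
  have mat2_add: "mat2 a b c d + mat2 a' b' c' d' = mat2 (a + a') (b + b') (c + c') (d + d')"
    for a b c d a' b' c' d'
    by (rule eq_matI) (auto simp: mat2_def)
  show ?thesis
    unfolding tomo_povm_def tomo_effect_def
    by (auto intro!: qubit_povm_pair psd[simplified] simp: mat2_add)
qed

definition tomo_probs :: "(nat \<Rightarrow> real) \<Rightarrow> bool" where
  "tomo_probs t \<longleftrightarrow> (\<forall>f. 0 \<le> t f \<and> t f \<le> 1) \<and> t 0 + t 1 = 1"

lemma tomo_probs_response:
  assumes "\<forall>B l. qubit_povm B \<longrightarrow> (\<forall>b<length B. resp B l b \<ge> 0) \<and> (\<Sum>b<length B. resp B l b) = (1::real)"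
  shows "tomo_probs (\<lambda>f. resp (tomo_povm f) l (tomo_outcome f))"
proof -
  have nonneg: "0 \<le> resp (tomo_povm f) l b" if "b < 2" for f b
    using assms[rule_format, OF qubit_povm_tomo] that by simp
  have total: "resp (tomo_povm f) l 0 + resp (tomo_povm f) l 1 = 1" for f
    using assms[rule_format, OF qubit_povm_tomo] by (simp add: sum_lessThan_2)
  have bounded: "0 \<le> resp (tomo_povm f) l (tomo_outcome f) \<and> resp (tomo_povm f) l (tomo_outcome f) \<le> 1" for f
    using nonneg[of 0 f] nonneg[of 1 f] total[of f] by (auto simp: tomo_outcome_def)
  have "tomo_povm 1 = tomo_povm 0" by (simp add: tomo_povm_def)
  then show ?thesis
    unfolding tomo_probs_def using bounded total[of 0] by (simp add: tomo_outcome_def)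
qed

(* 2x2 blocks are handled as functions nat \<Rightarrow> nat \<Rightarrow> complex, vectors of C^2 \<otimes> C^2 as V i b
   with i for Alice and b for Bob. *)
definition qform2 :: "(nat \<Rightarrow> nat \<Rightarrow> complex) \<Rightarrow> (nat \<Rightarrow> complex) \<Rightarrow> complex" where
  "qform2 X w = (\<Sum>i<2. \<Sum>j<2. cnj (w i) * X i j * w j)"

definition kron_qform ::
  "(nat \<Rightarrow> nat \<Rightarrow> complex) \<Rightarrow> (nat \<Rightarrow> nat \<Rightarrow> complex) \<Rightarrow> (nat \<Rightarrow> nat \<Rightarrow> complex) \<Rightarrow> complex" where
  "kron_qform X Y V = (\<Sum>i<2. \<Sum>b<2. \<Sum>j<2. \<Sum>b'<2. cnj (V i b) * X i j * Y b b' * V j b')"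

definition psd2 :: "(nat \<Rightarrow> nat \<Rightarrow> complex) \<Rightarrow> bool" where
  "psd2 Y \<longleftrightarrow> Im (Y 0 0) = 0 \<and> Re (Y 0 0) \<ge> 0 \<and> Im (Y 1 1) = 0 \<and> Re (Y 1 1) \<ge> 0 \<and>
     Y 1 0 = cnj (Y 0 1) \<and> (cmod (Y 0 1))\<^sup>2 \<le> Re (Y 0 0) * Re (Y 1 1)"

lemma psd_qform2: "psd 2 A \<Longrightarrow> 0 \<le> Re (qform2 (\<lambda>i j. A $$ (i, j)) w)"
  unfolding psd_def qform2_def Let_def
  by (drule conjunct2, drule bspec[of _ _ "vec 2 w"]) simp_all

lemma qform2_transpose: "qform2 (\<lambda>i j. X j i) w = qform2 X (\<lambda>i. cnj (w i))"
  by (simp add: qform2_def sum_lessThan_2 algebra_simps)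

lemma psd2_transpose: "psd2 Y \<Longrightarrow> psd2 (\<lambda>b b'. Y b' b)"
  unfolding psd2_def by (metis complex_cnj_cnj complex_mod_cnj mult.commute)

lemma kron_qform_swap: "kron_qform X Y V = kron_qform Y X (\<lambda>b i. V i b)"
  by (simp add: kron_qform_def sum_lessThan_2 algebra_simps)

lemma psd2_cholesky:
  assumes "psd2 Y"
  obtains y0 y1 d where "d \<ge> 0" "Y 0 0 = y0 * cnj y0" "Y 0 1 = y0 * cnj y1" "Y 1 0 = y1 * cnj y0"
    "Y 1 1 = y1 * cnj y1 + of_real d"
proof -
  define \<alpha> \<beta> where "\<alpha> = Re (Y 0 0)" and "\<beta> = Re (Y 1 1)"
  have Y00: "Y 0 0 = of_real \<alpha>" and Y11: "Y 1 1 = of_real \<beta>" and "\<alpha> \<ge> 0" "\<beta> \<ge> 0"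
    and Y10: "Y 1 0 = cnj (Y 0 1)" and cs: "(cmod (Y 0 1))\<^sup>2 \<le> \<alpha> * \<beta>"
    using assms by (auto simp: psd2_def \<alpha>_def \<beta>_def complex_eq_iff)
  show thesis
  proof (cases "\<alpha> = 0")
    case True
    then have "Y 0 1 = 0" using cs by simp
    then show thesis using that[of \<beta> 0 0] True \<open>\<beta> \<ge> 0\<close> Y00 Y10 Y11 by simp
  next
    case False
    define y0 y1 where "y0 = complex_of_real (sqrt \<alpha>)" and "y1 = Y 1 0 / complex_of_real (sqrt \<alpha>)"
    have "y1 * cnj y1 = of_real ((cmod (Y 0 1))\<^sup>2 / \<alpha>)"
      using \<open>\<alpha> \<ge> 0\<close> Y10
      by (simp add: y0_def y1_def mult.commute[of "cnj _"] flip: of_real_mult complex_norm_square)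
    moreover have "y0 * cnj y0 = of_real \<alpha>" "y0 * cnj y1 = Y 0 1" "y1 * cnj y0 = Y 1 0"
      using False \<open>\<alpha> \<ge> 0\<close> Y10 by (simp_all add: y0_def y1_def flip: of_real_mult)
    moreover have "\<beta> - (cmod (Y 0 1))\<^sup>2 / \<alpha> \<ge> 0"
      using cs False \<open>\<alpha> \<ge> 0\<close> by (simp add: field_simps)
    ultimately show thesis
      using that[of "\<beta> - (cmod (Y 0 1))\<^sup>2 / \<alpha>" y0 y1] Y00 Y11 by (simp flip: of_real_add)
  qed
qed

lemma kron_qform_nonneg:
  assumes X: "\<And>w. 0 \<le> Re (qform2 X w)" and "psd2 Y"
  shows "0 \<le> Re (kron_qform X Y V)"
proof -
  obtain y0 y1 d where "d \<ge> 0" "Y 0 0 = y0 * cnj y0" "Y 0 1 = y0 * cnj y1" "Y 1 0 = y1 * cnj y0"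
    "Y 1 1 = y1 * cnj y1 + of_real d"
    using psd2_cholesky[OF \<open>psd2 Y\<close>] by blast
  then have "kron_qform X Y V
      = qform2 X (\<lambda>i. cnj y0 * V i 0 + cnj y1 * V i 1) + of_real d * qform2 X (\<lambda>i. V i 1)"
    by (simp add: kron_qform_def qform2_def sum_lessThan_2 algebra_simps)
  then show ?thesis using X[of "\<lambda>i. cnj y0 * V i 0 + cnj y1 * V i 1"] X[of "\<lambda>i. V i 1"] \<open>d \<ge> 0\<close>
    by simp
qed

(* For tomo_probs t, reconstruct t = (I + r . sigma)/2 with r \<in> [-1,1]^3, and this is (I + mu r . sigma)/2. *)
definition noisy_response :: "real \<Rightarrow> (nat \<Rightarrow> real) \<Rightarrow> nat \<Rightarrow> nat \<Rightarrow> complex" where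
  "noisy_response \<mu> t b b' =
     of_real \<mu> * reconstruct (\<lambda>f. of_real (t f)) b b' + of_real (1 - \<mu>) * (if b = b' then 1/2 else 0)"

lemma bloch_noise_bound:
  fixes \<mu> t0 t2 t3 :: real
  assumes "0 \<le> \<mu>" "3 * \<mu>\<^sup>2 \<le> 1" "t0 \<in> {0..1}" "t2 \<in> {0..1}" "t3 \<in> {0..1}"
  shows "(\<mu> * (2 * t2 - 1) / 2)\<^sup>2 + (\<mu> * (2 * t3 - 1) / 2)\<^sup>2
    \<le> (\<mu> * t0 + (1 - \<mu>) / 2) * (\<mu> * (1 - t0) + (1 - \<mu>) / 2)"
proof -
  have sq: "\<mu>\<^sup>2 * (2 * t - 1)\<^sup>2 \<le> \<mu>\<^sup>2" if "t \<in> {0..1}" for t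
  proof -
    have "(2 * t - 1)\<^sup>2 \<le> 1"
      using that mult_nonneg_nonpos[of t "t - 1"] by (simp add: power2_eq_square algebra_simps)
    then show ?thesis by (simp add: mult_left_le)
  qed
  have "\<mu>\<^sup>2 * (2 * t0 - 1)\<^sup>2 + \<mu>\<^sup>2 * (2 * t2 - 1)\<^sup>2 + \<mu>\<^sup>2 * (2 * t3 - 1)\<^sup>2 \<le> 1"
    using sq[OF assms(3)] sq[OF assms(4)] sq[OF assms(5)] assms(2) by linarith
  then show ?thesis by (simp add: power2_eq_square field_simps)
qed

lemma noisy_response_psd2:
  assumes t: "tomo_probs t" and \<mu>: "\<mu> \<in> {0 .. 1 / sqrt 3}"
  shows "psd2 (noisy_response \<mu> t)"
proof -
  have "\<mu> * sqrt 3 \<le> 1" using \<mu> by (simp add: field_simps)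
  then have "(\<mu> * sqrt 3)\<^sup>2 \<le> 1" using \<mu> by (simp add: power_le_one)
  then have \<mu>3: "3 * \<mu>\<^sup>2 \<le> 1" by (simp add: power_mult_distrib)
  have "1 / sqrt 3 \<le> (1::real)" by (simp add: divide_le_eq)
  then have "\<mu> \<le> 1" using \<mu> by (meson atLeastAtMost_iff order_trans)
  have t1: "t (Suc 0) = 1 - t 0" and tb: "t f \<in> {0..1}" for f using t by (auto simp: tomo_probs_def)
  have b: "(\<mu> * (2 * t 2 - 1) / 2)\<^sup>2 + (\<mu> * (2 * t 3 - 1) / 2)\<^sup>2
      \<le> (\<mu> * t 0 + (1 - \<mu>) / 2) * (\<mu> * (1 - t 0) + (1 - \<mu>) / 2)"
    using bloch_noise_bound[OF _ \<mu>3 tb tb tb] \<mu> by simp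
  have diag: "0 \<le> \<mu> * t 0 + (1 - \<mu>) / 2" "0 \<le> \<mu> * (1 - t 0) + (1 - \<mu>) / 2"
    using \<mu> tb[of 0] \<open>\<mu> \<le> 1\<close> by auto
  have entries: "noisy_response \<mu> t 0 0 = of_real (\<mu> * t 0 + (1 - \<mu>) / 2)"
    "noisy_response \<mu> t 1 1 = of_real (\<mu> * (1 - t 0) + (1 - \<mu>) / 2)"
    "noisy_response \<mu> t 0 1 = Complex (\<mu> * (2 * t 2 - 1) / 2) (- (\<mu> * (2 * t 3 - 1) / 2))"
    "noisy_response \<mu> t 1 0 = Complex (\<mu> * (2 * t 2 - 1) / 2) (\<mu> * (2 * t 3 - 1) / 2)"
    by (simp_all add: noisy_response_def reconstruct_def t1 complex_eq_iff field_simps)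
  show ?thesis
    using b diag unfolding psd2_def entries by (simp add: cmod_power2 complex_eq_iff)
qed

lemma noisy_response_expand:
  assumes "tomo_probs t"
  shows "noisy_response \<mu> t b b' = of_real \<mu> * reconstruct (\<lambda>f. of_real (t f)) b b' +
    of_real (1 - \<mu>) * (if b = b' then 1/2 else 0) *
      (reconstruct (\<lambda>f. of_real (t f)) 0 0 + reconstruct (\<lambda>f. of_real (t f)) 1 1)"
  using assms by (simp add: noisy_response_def tomo_probs_def reconstruct_def flip: of_real_add)

lemma eigenvalue_neg_qform:
  assumes "M \<in> carrier_mat n n" "eigenvalue M (of_real x)" "x < 0"
  obtains v where "v \<in> carrier_vec n" "Re (\<Sum>r<n. \<Sum>s<n. cnj (v $ r) * M $$ (r, s) * v $ s) < 0"
proof -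
  obtain v where v: "v \<in> carrier_vec n" "v \<noteq> 0\<^sub>v n" and ev: "M *\<^sub>v v = of_real x \<cdot>\<^sub>v v"
    using assms unfolding eigenvalue_def eigenvector_def by auto
  have "(\<Sum>r<n. \<Sum>s<n. cnj (v $ r) * M $$ (r, s) * v $ s) = (\<Sum>r<n. cnj (v $ r) * (M *\<^sub>v v) $ r)"
    using assms(1) v by (simp add: scalar_prod_def sum_distrib_left atLeast0LessThan mult.assoc)
  also have "\<dots> = (\<Sum>r<n. of_real x * (v $ r * cnj (v $ r)))"
    using v by (simp add: ev mult_ac)
  also have "\<dots> = of_real (x * (\<Sum>r<n. (cmod (v $ r))\<^sup>2))"
    by (simp add: sum_distrib_left flip: complex_norm_square)
  finally have q: "Re (\<Sum>r<n. \<Sum>s<n. cnj (v $ r) * M $$ (r, s) * v $ s) = x * (\<Sum>r<n. (cmod (v $ r))\<^sup>2)"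
    by simp
  obtain r where "r < n" "v $ r \<noteq> 0"
    using v by (metis eq_vecI carrier_vecD index_zero_vec(1,2))
  then have "0 < (\<Sum>r<n. (cmod (v $ r))\<^sup>2)"
    by (intro sum_pos2[of _ r]) auto
  then have "Re (\<Sum>r<n. \<Sum>s<n. cnj (v $ r) * M $$ (r, s) * v $ s) < 0"
    unfolding q using assms(3) by (simp add: mult_neg_pos)
  then show thesis using that[OF v(1)] by blast
qed

lemma separable_no_neg_eigenvalue:
  assumes M: "M \<in> carrier_mat 4 4"
    and decomp: "\<And>i j b b'. i < 2 \<Longrightarrow> j < 2 \<Longrightarrow> b < 2 \<Longrightarrow> b' < 2 \<Longrightarrow>
      ((\<lambda>l. of_real (c l) * X l i j * Y l b b') has_sum M $$ (2 * i + b, 2 * j + b')) UNIV"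
    and c: "\<And>l. 0 \<le> c l" and XY: "\<And>l V. 0 \<le> Re (kron_qform (X l) (Y l) V)"
  shows "\<not> has_neg_eigenvalue M"
proof
  assume "has_neg_eigenvalue M"
  then obtain v where "Re (\<Sum>r<4. \<Sum>s<4. cnj (v $ r) * M $$ (r, s) * v $ s) < 0"
    using eigenvalue_neg_qform[OF M] unfolding has_neg_eigenvalue_def by blast
  moreover define V where "V i b = v $ (2 * i + b)" for i b
  ultimately have neg: "Re (\<Sum>i<2. \<Sum>b<2. \<Sum>j<2. \<Sum>b'<2. cnj (V i b) * M $$ (2 * i + b, 2 * j + b') * V j b') < 0"
    by (simp add: sum_lessThan_4_split)
  have "((\<lambda>l. \<Sum>i<2. \<Sum>b<2. \<Sum>j<2. \<Sum>b'<2. cnj (V i b) * (of_real (c l) * X l i j * Y l b b') * V j b')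
      has_sum (\<Sum>i<2. \<Sum>b<2. \<Sum>j<2. \<Sum>b'<2. cnj (V i b) * M $$ (2 * i + b, 2 * j + b') * V j b')) UNIV"
    by (intro has_sum_sum has_sum_cmult_left has_sum_cmult_right decomp) auto
  then have sums: "((\<lambda>l. Re (of_real (c l) * kron_qform (X l) (Y l) V))
      has_sum Re (\<Sum>i<2. \<Sum>b<2. \<Sum>j<2. \<Sum>b'<2. cnj (V i b) * M $$ (2 * i + b, 2 * j + b') * V j b')) UNIV"
    by (intro has_sum_Re) (simp add: kron_qform_def sum_distrib_left mult_ac)
  have "0 \<le> Re (of_real (c l) * kron_qform (X l) (Y l) V)" for l
    using c XY by simp
  then show False using has_sum_nonneg[OF sums] neg by fastforce
qed

lemma psd_of_qubit_state: "qubit_state A \<Longrightarrow> psd 2 A"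
  by (simp add: qubit_state_def density_def)

lemma lhs_model_B_to_A_decomposition:
  assumes \<rho>: "\<rho> \<in> carrier_mat 4 4" and "lhs_model_B_to_A \<rho>"
  obtains P :: "nat \<Rightarrow> real" and \<sigma> :: "nat \<Rightarrow> complex mat" and t :: "nat \<Rightarrow> nat \<Rightarrow> real"
  where "\<And>l. 0 \<le> P l" "\<And>l. psd 2 (\<sigma> l)" "\<And>l. tomo_probs (t l)"
    "\<And>i j b b'. i < 2 \<Longrightarrow> j < 2 \<Longrightarrow> b < 2 \<Longrightarrow> b' < 2 \<Longrightarrow>
      ((\<lambda>l. of_real (P l) * \<sigma> l $$ (i, j) * reconstruct (\<lambda>f. of_real (t l f)) b b')
        has_sum \<rho> $$ (2 * i + b, 2 * j + b')) UNIV"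
proof -
  obtain P :: "nat \<Rightarrow> real" and \<sigma> :: "nat \<Rightarrow> complex mat"
    and resp :: "complex mat list \<Rightarrow> nat \<Rightarrow> nat \<Rightarrow> real" where P: "\<forall>l. P l \<ge> 0" and \<sigma>: "\<forall>l. qubit_state (\<sigma> l)"
    and resp: "\<forall>B l. qubit_povm B \<longrightarrow> (\<forall>b<length B. resp B l b \<ge> 0) \<and> (\<Sum>b<length B. resp B l b) = 1"
    and model: "\<forall>A B a b. qubit_povm A \<longrightarrow> qubit_povm B \<longrightarrow> a < length A \<longrightarrow> b < length B \<longrightarrow>
      ((\<lambda>l. complex_of_real (P l) * mtrace (\<sigma> l * (A ! a)) * complex_of_real (resp B l b))
        has_sum mtrace (kron (A ! a) (B ! b) * \<rho>)) UNIV"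
    using assms(2) unfolding lhs_model_B_to_A_def by blast
  define t where "t l = (\<lambda>f. resp (tomo_povm f) l (tomo_outcome f))" for l
  have stat: "((\<lambda>l. of_real (P l) * mtrace (\<sigma> l * tomo_effect e) * of_real (t l f))
      has_sum mtrace (kron (tomo_effect e) (tomo_effect f) * \<rho>)) UNIV" if "e < 4" "f < 4" for e f
    using model[rule_format, of "tomo_povm e" "tomo_povm f" "tomo_outcome e" "tomo_outcome f"]
    by (simp add: t_def qubit_povm_tomo tomo_povm_effect that)
  have rec: "reconstruct (\<lambda>e. of_real (P l) * mtrace (\<sigma> l * tomo_effect e)) i j = of_real (P l) * \<sigma> l $$ (i, j)"
    if "i < 2" "j < 2" for l i j
    using \<sigma> psd_of_qubit_state that by (simp add: reconstruct_cmult reconstruct_mtrace psd_def)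
  show thesis
  proof (rule that)
    show "0 \<le> P l" "psd 2 (\<sigma> l)" "tomo_probs (t l)" for l
      using P \<sigma> psd_of_qubit_state tomo_probs_response[OF resp] by (auto simp: t_def)
    show "((\<lambda>l. of_real (P l) * \<sigma> l $$ (i, j) * reconstruct (\<lambda>f. of_real (t l f)) b b')
        has_sum \<rho> $$ (2 * i + b, 2 * j + b')) UNIV"
      if "i < 2" "j < 2" "b < 2" "b' < 2" for i j b b'
      using has_sum_product_tomography[OF \<rho> stat that] rec that by simp
  qed
qed

lemma lhs_model_A_to_B_decomposition:
  assumes \<rho>: "\<rho> \<in> carrier_mat 4 4" and "lhs_model_A_to_B \<rho>"
  obtains P :: "nat \<Rightarrow> real" and \<sigma> :: "nat \<Rightarrow> complex mat" and t :: "nat \<Rightarrow> nat \<Rightarrow> real"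
  where "\<And>l. 0 \<le> P l" "\<And>l. psd 2 (\<sigma> l)" "\<And>l. tomo_probs (t l)"
    "\<And>i j b b'. i < 2 \<Longrightarrow> j < 2 \<Longrightarrow> b < 2 \<Longrightarrow> b' < 2 \<Longrightarrow>
      ((\<lambda>l. of_real (P l) * reconstruct (\<lambda>e. of_real (t l e)) i j * \<sigma> l $$ (b, b'))
        has_sum \<rho> $$ (2 * i + b, 2 * j + b')) UNIV"
proof -
  obtain P :: "nat \<Rightarrow> real" and \<sigma> :: "nat \<Rightarrow> complex mat"
    and resp :: "complex mat list \<Rightarrow> nat \<Rightarrow> nat \<Rightarrow> real" where P: "\<forall>l. P l \<ge> 0" and \<sigma>: "\<forall>l. qubit_state (\<sigma> l)"
    and resp: "\<forall>A l. qubit_povm A \<longrightarrow> (\<forall>a<length A. resp A l a \<ge> 0) \<and> (\<Sum>a<length A. resp A l a) = 1"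
    and model: "\<forall>A B a b. qubit_povm A \<longrightarrow> qubit_povm B \<longrightarrow> a < length A \<longrightarrow> b < length B \<longrightarrow>
      ((\<lambda>l. complex_of_real (P l) * complex_of_real (resp A l a) * mtrace (\<sigma> l * (B ! b)))
        has_sum mtrace (kron (A ! a) (B ! b) * \<rho>)) UNIV"
    using assms(2) unfolding lhs_model_A_to_B_def by blast
  define t where "t l = (\<lambda>e. resp (tomo_povm e) l (tomo_outcome e))" for l
  have stat: "((\<lambda>l. of_real (P l) * of_real (t l e) * mtrace (\<sigma> l * tomo_effect f))
      has_sum mtrace (kron (tomo_effect e) (tomo_effect f) * \<rho>)) UNIV" if "e < 4" "f < 4" for e f
    using model[rule_format, of "tomo_povm e" "tomo_povm f" "tomo_outcome e" "tomo_outcome f"]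
    by (simp add: t_def qubit_povm_tomo tomo_povm_effect that)
  have rec: "reconstruct (\<lambda>f. mtrace (\<sigma> l * tomo_effect f)) b b' = \<sigma> l $$ (b, b')"
    if "b < 2" "b' < 2" for l b b'
    using \<sigma> psd_of_qubit_state that by (simp add: reconstruct_mtrace psd_def)
  show thesis
  proof (rule that)
    show "0 \<le> P l" "psd 2 (\<sigma> l)" "tomo_probs (t l)" for l
      using P \<sigma> psd_of_qubit_state tomo_probs_response[OF resp] by (auto simp: t_def)
    show "((\<lambda>l. of_real (P l) * reconstruct (\<lambda>e. of_real (t l e)) i j * \<sigma> l $$ (b, b'))
        has_sum \<rho> $$ (2 * i + b, 2 * j + b')) UNIV"
      if "i < 2" "j < 2" "b < 2" "b' < 2" for i j b b'
      using has_sum_product_tomography[OF \<rho> stat that] rec that by (simp add: reconstruct_cmult)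
  qed
qed

lemma no_neg_eigenvalue_B_to_A:
  assumes \<rho>: "two_qubit_state \<rho>" and \<mu>: "\<mu> \<in> {0 .. 1 / sqrt 3}" and lhs: "lhs_model_B_to_A \<rho>"
  shows "\<not> has_neg_eigenvalue (ptranspose_B (complex_of_real \<mu> \<cdot>\<^sub>m \<rho> +
    complex_of_real (1 - \<mu>) \<cdot>\<^sub>m kron (ptrace_B \<rho>) ((1 / 2) \<cdot>\<^sub>m 1\<^sub>m 2)))"
    (is "\<not> has_neg_eigenvalue ?M")
proof -
  have \<rho>4: "\<rho> \<in> carrier_mat 4 4" using \<rho> by (simp add: two_qubit_state_def density_def psd_def)
  obtain P :: "nat \<Rightarrow> real" and \<sigma> :: "nat \<Rightarrow> complex mat" and t :: "nat \<Rightarrow> nat \<Rightarrow> real"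
    where P: "\<And>l. 0 \<le> P l" and \<sigma>: "\<And>l. psd 2 (\<sigma> l)" and t: "\<And>l. tomo_probs (t l)"
    and decomp: "\<And>i j b b'. i < 2 \<Longrightarrow> j < 2 \<Longrightarrow> b < 2 \<Longrightarrow> b' < 2 \<Longrightarrow>
      ((\<lambda>l. of_real (P l) * \<sigma> l $$ (i, j) * reconstruct (\<lambda>f. of_real (t l f)) b b')
        has_sum \<rho> $$ (2 * i + b, 2 * j + b')) UNIV"
    using lhs_model_B_to_A_decomposition[OF \<rho>4 lhs] by blast
  define G where "G l = reconstruct (\<lambda>f. of_real (t l f))" for l
  have M: "?M \<in> carrier_mat 4 4" by (simp add: ptranspose_B_def)
  have entries: "((\<lambda>l. of_real (P l) * \<sigma> l $$ (i, j) * noisy_response \<mu> (t l) b' b)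
      has_sum ?M $$ (2 * i + b, 2 * j + b')) UNIV" if "i < 2" "j < 2" "b < 2" "b' < 2" for i j b b'
  proof -
    have M_entry: "?M $$ (2 * i + b, 2 * j + b') = of_real \<mu> * \<rho> $$ (2 * i + b', 2 * j + b) +
        of_real (1 - \<mu>) * (if b' = b then 1/2 else 0) * (\<rho> $$ (2 * i + 0, 2 * j + 0) + \<rho> $$ (2 * i + 1, 2 * j + 1))"
      using that \<rho>4 by (simp add: ptranspose_B_def kron_def ptrace_B_def sum_lessThan_2)
    have mixture: "((\<lambda>l. of_real \<mu> * (of_real (P l) * \<sigma> l $$ (i, j) * G l b' b) +
        of_real (1 - \<mu>) * (if b' = b then 1/2 else 0) *
          (of_real (P l) * \<sigma> l $$ (i, j) * G l 0 0 + of_real (P l) * \<sigma> l $$ (i, j) * G l 1 1))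
      has_sum of_real \<mu> * \<rho> $$ (2 * i + b', 2 * j + b) +
        of_real (1 - \<mu>) * (if b' = b then 1/2 else 0) * (\<rho> $$ (2 * i + 0, 2 * j + 0) + \<rho> $$ (2 * i + 1, 2 * j + 1))) UNIV"
      unfolding G_def using that by (intro has_sum_add has_sum_cmult_right decomp) auto
    have "of_real \<mu> * (of_real (P l) * \<sigma> l $$ (i, j) * G l b' b) +
        of_real (1 - \<mu>) * (if b' = b then 1/2 else 0) *
          (of_real (P l) * \<sigma> l $$ (i, j) * G l 0 0 + of_real (P l) * \<sigma> l $$ (i, j) * G l 1 1)
      = of_real (P l) * \<sigma> l $$ (i, j) * noisy_response \<mu> (t l) b' b" for l
      by (simp add: noisy_response_expand[OF t] G_def algebra_simps)
    then show ?thesis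
      using mixture unfolding M_entry by simp
  qed
  have nonneg: "0 \<le> Re (kron_qform (\<lambda>i j. \<sigma> l $$ (i, j)) (\<lambda>b b'. noisy_response \<mu> (t l) b' b) V)" for l V
    using kron_qform_nonneg[OF psd_qform2[OF \<sigma>] psd2_transpose[OF noisy_response_psd2[OF t \<mu>]]] .
  show ?thesis
    by (rule separable_no_neg_eigenvalue[OF M entries P nonneg])
qed

lemma no_neg_eigenvalue_A_to_B:
  assumes \<rho>: "two_qubit_state \<rho>" and \<mu>: "\<mu> \<in> {0 .. 1 / sqrt 3}" and lhs: "lhs_model_A_to_B \<rho>"
  shows "\<not> has_neg_eigenvalue (ptranspose_B (complex_of_real \<mu> \<cdot>\<^sub>m \<rho> +
    complex_of_real (1 - \<mu>) \<cdot>\<^sub>m kron ((1 / 2) \<cdot>\<^sub>m 1\<^sub>m 2) (ptrace_A \<rho>)))"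
    (is "\<not> has_neg_eigenvalue ?M")
proof -
  have \<rho>4: "\<rho> \<in> carrier_mat 4 4" using \<rho> by (simp add: two_qubit_state_def density_def psd_def)
  obtain P :: "nat \<Rightarrow> real" and \<sigma> :: "nat \<Rightarrow> complex mat" and t :: "nat \<Rightarrow> nat \<Rightarrow> real"
    where P: "\<And>l. 0 \<le> P l" and \<sigma>: "\<And>l. psd 2 (\<sigma> l)" and t: "\<And>l. tomo_probs (t l)"
    and decomp: "\<And>i j b b'. i < 2 \<Longrightarrow> j < 2 \<Longrightarrow> b < 2 \<Longrightarrow> b' < 2 \<Longrightarrow>
      ((\<lambda>l. of_real (P l) * reconstruct (\<lambda>e. of_real (t l e)) i j * \<sigma> l $$ (b, b'))
        has_sum \<rho> $$ (2 * i + b, 2 * j + b')) UNIV"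
    using lhs_model_A_to_B_decomposition[OF \<rho>4 lhs] by blast
  define G where "G l = reconstruct (\<lambda>e. of_real (t l e))" for l
  have M: "?M \<in> carrier_mat 4 4" by (simp add: ptranspose_B_def)
  have entries: "((\<lambda>l. of_real (P l) * noisy_response \<mu> (t l) i j * \<sigma> l $$ (b', b))
      has_sum ?M $$ (2 * i + b, 2 * j + b')) UNIV" if "i < 2" "j < 2" "b < 2" "b' < 2" for i j b b'
  proof -
    have M_entry: "?M $$ (2 * i + b, 2 * j + b') = of_real \<mu> * \<rho> $$ (2 * i + b', 2 * j + b) +
        of_real (1 - \<mu>) * (if i = j then 1/2 else 0) * (\<rho> $$ (2 * 0 + b', 2 * 0 + b) + \<rho> $$ (2 * 1 + b', 2 * 1 + b))"
      using that \<rho>4 by (simp add: ptranspose_B_def kron_def ptrace_A_def sum_lessThan_2)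
    have mixture: "((\<lambda>l. of_real \<mu> * (of_real (P l) * G l i j * \<sigma> l $$ (b', b)) +
        of_real (1 - \<mu>) * (if i = j then 1/2 else 0) *
          (of_real (P l) * G l 0 0 * \<sigma> l $$ (b', b) + of_real (P l) * G l 1 1 * \<sigma> l $$ (b', b)))
      has_sum of_real \<mu> * \<rho> $$ (2 * i + b', 2 * j + b) +
        of_real (1 - \<mu>) * (if i = j then 1/2 else 0) * (\<rho> $$ (2 * 0 + b', 2 * 0 + b) + \<rho> $$ (2 * 1 + b', 2 * 1 + b))) UNIV"
      unfolding G_def using that by (intro has_sum_add has_sum_cmult_right decomp) auto
    have "of_real \<mu> * (of_real (P l) * G l i j * \<sigma> l $$ (b', b)) +
        of_real (1 - \<mu>) * (if i = j then 1/2 else 0) *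
          (of_real (P l) * G l 0 0 * \<sigma> l $$ (b', b) + of_real (P l) * G l 1 1 * \<sigma> l $$ (b', b))
      = of_real (P l) * noisy_response \<mu> (t l) i j * \<sigma> l $$ (b', b)" for l
      by (simp add: noisy_response_expand[OF t] G_def algebra_simps)
    then show ?thesis
      using mixture unfolding M_entry by simp
  qed
  have \<sigma>T: "0 \<le> Re (qform2 (\<lambda>b b'. \<sigma> l $$ (b', b)) w)" for l w
    using psd_qform2[OF \<sigma>, of l "\<lambda>i. cnj (w i)"] qform2_transpose[of "\<lambda>i j. \<sigma> l $$ (i, j)" w]
    by simp
  have nonneg: "0 \<le> Re (kron_qform (noisy_response \<mu> (t l)) (\<lambda>b b'. \<sigma> l $$ (b', b)) V)" for l V
    unfolding kron_qform_swap[of "noisy_response \<mu> (t l)"]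
    by (rule kron_qform_nonneg[OF \<sigma>T noisy_response_psd2[OF t \<mu>]])
  show ?thesis
    by (rule separable_no_neg_eigenvalue[OF M entries P nonneg])
qed

theorem mainTheorem2:
  fixes \<rho> :: "complex mat" and \<mu>1 \<mu>2 :: real
  assumes "two_qubit_state \<rho>"
    and "\<mu>1 \<in> {0 .. 1 / sqrt 3}" and "\<mu>2 \<in> {0 .. 1 / sqrt 3}"
  shows "(has_neg_eigenvalue (ptranspose_B
            (complex_of_real \<mu>1 \<cdot>\<^sub>m \<rho> + complex_of_real (1 - \<mu>1) \<cdot>\<^sub>m
               kron (ptrace_B \<rho>) ((1 / 2) \<cdot>\<^sub>m 1\<^sub>m 2)))
           \<longrightarrow> steerable_B_to_A \<rho>)
       \<and> (has_neg_eigenvalue (ptranspose_B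
            (complex_of_real \<mu>2 \<cdot>\<^sub>m \<rho> + complex_of_real (1 - \<mu>2) \<cdot>\<^sub>m
               kron ((1 / 2) \<cdot>\<^sub>m 1\<^sub>m 2) (ptrace_A \<rho>)))
           \<longrightarrow> steerable_A_to_B \<rho>)"
  using no_neg_eigenvalue_B_to_A[OF assms(1,2)] no_neg_eigenvalue_A_to_B[OF assms(1,3)]
  unfolding steerable_B_to_A_def steerable_A_to_B_def by blast

end
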